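(* Let $p\ge p_0>1$. Let $f,g\in L^p$ be functions whose supports have finite measure, with $\|g\|_{p_0}\le\|f\|_{p_0}$. Suppose there exists $\tau_1\in[0,\infty)$ such that $\int_\tau^\infty\lambda_g(s)\,ds\le\int_\tau^\infty\lambda_f(s)\,ds$ for $\tau\ge\tau_1$, and $\int_\tau^\infty\lambda_f(s)\,ds\le\int_\tau^\infty\lambda_g(s)\,ds$ for $\tau\le\tau_1$. Then $\|g\|_p\le\|f\|_p$.
   Context: $\lambda_f(\tau)=\mu\{|f|>\tau\}$ denotes the distribution function of a measurable function $f$ on a $\sigma$-finite measure space $(\Omega,\mu)$; $\|\cdot\|_p$ is the $L^p(\Omega)$ norm. *)

theory Defs
  imports "HOL-Analysis.Analysis"
begin

definition distfun :: "'a measure \<Rightarrow> ('a \<Rightarrow> 'b::real_normed_vector) \<Rightarrow> real \<Rightarrow> ennreal" where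
  "distfun M f \<tau> = emeasure M {x \<in> space M. \<tau> < norm (f x)}"

definition in_Lp :: "'a measure \<Rightarrow> real \<Rightarrow> ('a \<Rightarrow> 'b::{banach, second_countable_topology}) \<Rightarrow> bool" where
  "in_Lp M p f \<longleftrightarrow> f \<in> borel_measurable M \<and> integrable M (\<lambda>x. norm (f x) powr p)"

definition Lp_norm :: "'a measure \<Rightarrow> real \<Rightarrow> ('a \<Rightarrow> 'b::real_normed_vector) \<Rightarrow> real" where
  "Lp_norm M p f = (\<integral>x. norm (f x) powr p \<partial>M) powr (1 / p)"

end

theory Submission
  imports Defs
begin

text \<open>Write \<open>\<Lambda>\<^sub>u(\<tau>) = \<integral>\<^sub>\<tau>\<^sup>\<infinity> \<lambda>\<^sub>u\<close>. By Fubini \<open>\<Lambda>\<^sub>u(\<tau>) = \<integral> (|u| - \<tau>)\<^sup>+ d\<mu>\<close>, and integrating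
  once more against \<open>t\<^sup>q\<^sup>-\<^sup>2\<close> gives \<open>\<parallel>u\<parallel>\<^sub>q\<^sup>q = q(q-1) \<integral>\<^sub>0\<^sup>\<infinity> t\<^sup>q\<^sup>-\<^sup>2 \<Lambda>\<^sub>u(t) dt\<close>. So the hypotheses say
  that \<open>\<Lambda>\<^sub>g - \<Lambda>\<^sub>f\<close> is nonnegative below \<open>\<tau>\<^sub>1\<close>, nonpositive above it, and has nonpositive
  moment against \<open>t\<^sup>p\<^sup>0\<^sup>-\<^sup>2\<close>. Passing to the weight \<open>t\<^sup>p\<^sup>-\<^sup>2\<close> multiplies by \<open>t\<^sup>p\<^sup>-\<^sup>p\<^sup>0\<close>, which is
  at most \<open>\<tau>\<^sub>1\<^sup>p\<^sup>-\<^sup>p\<^sup>0\<close> where the difference is positive and at least that where it is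
  negative, so the moment stays nonpositive. Finite support only serves to put \<open>f, g\<close> in \<open>L\<^sup>p\<^sup>0\<close>.\<close>

definition distfun_tail :: "'a measure \<Rightarrow> ('a \<Rightarrow> 'b::real_normed_vector) \<Rightarrow> real \<Rightarrow> ennreal" where
  "distfun_tail M u \<tau> = (\<integral>\<^sup>+ s \<in> {\<tau>..}. distfun M u s \<partial>lborel)"

definition tail_moment :: "'a measure \<Rightarrow> real \<Rightarrow> ('a \<Rightarrow> 'b::real_normed_vector) \<Rightarrow> ennreal" where
  "tail_moment M q u =
     (\<integral>\<^sup>+ t. ennreal (t powr (q - 2)) * distfun_tail M u t \<partial>restrict_space lborel {0<..})"

lemma nn_integral_Ici_emeasure_less:
  fixes h :: "'a \<Rightarrow> real"
  assumes "sigma_finite_measure M" and [measurable]: "h \<in> borel_measurable M"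
  shows "(\<integral>\<^sup>+ s \<in> {\<tau>..}. emeasure M {x \<in> space M. s < h x} \<partial>lborel) = (\<integral>\<^sup>+ x. ennreal (h x - \<tau>) \<partial>M)"
proof -
  interpret pair_sigma_finite M lborel
    by (intro pair_sigma_finite.intro assms(1) sigma_finite_lborel)
  have [measurable]: "(\<lambda>(x, s). indicator {\<tau>..<h x} s :: ennreal) \<in> borel_measurable (M \<Otimes>\<^sub>M lborel)"
    unfolding indicator_def atLeastLessThan_iff by measurable
  have "(\<integral>\<^sup>+ s \<in> {\<tau>..}. emeasure M {x \<in> space M. s < h x} \<partial>lborel)
      = (\<integral>\<^sup>+ s. \<integral>\<^sup>+ x. indicator {\<tau>..<h x} s \<partial>M \<partial>lborel)"
  proof (intro nn_integral_cong)
    fix s :: real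
    have "emeasure M {x \<in> space M. s < h x} = (\<integral>\<^sup>+ x. indicator {x \<in> space M. s < h x} x \<partial>M)"
      by simp
    then show "emeasure M {x \<in> space M. s < h x} * indicator {\<tau>..} s = (\<integral>\<^sup>+ x. indicator {\<tau>..<h x} s \<partial>M)"
      by (cases "\<tau> \<le> s") (auto intro!: nn_integral_cong simp: indicator_def)
  qed
  also have "\<dots> = (\<integral>\<^sup>+ x. \<integral>\<^sup>+ s. indicator {\<tau>..<h x} s \<partial>lborel \<partial>M)"
    by (rule Fubini') simp
  also have "\<dots> = (\<integral>\<^sup>+ x. ennreal (h x - \<tau>) \<partial>M)"
  proof (intro nn_integral_cong)
    fix x
    show "(\<integral>\<^sup>+ s. indicator {\<tau>..<h x} s \<partial>lborel) = ennreal (h x - \<tau>)"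
      by (cases "\<tau> \<le> h x") (auto simp: ennreal_neg)
  qed
  finally show ?thesis .
qed

lemma nn_integral_powr_mult_excess:
  fixes c q :: real
  assumes q: "1 < q" and c: "0 \<le> c"
  shows "(\<integral>\<^sup>+ t. ennreal (t powr (q - 2)) * ennreal (c - t) \<partial>restrict_space lborel {0<..})
       = ennreal (c powr q / (q * (q - 1)))"
proof -
  have "((\<lambda>t. c * t powr (q - 2) - t powr (q - 1))
          has_integral (c * (c powr (q - 1) / (q - 1)) - c powr q / q)) {0..c}"
    using has_integral_powr_from_0[of "q - 2" c] has_integral_powr_from_0[of "q - 1" c] q c
    by (intro has_integral_diff has_integral_mult_right) simp_all
  also have "c * (c powr (q - 1) / (q - 1)) - c powr q / q = c powr q / (q * (q - 1))"
    using q c by (cases "c = 0") (simp_all add: powr_mult_base field_simps)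
  also have "((\<lambda>t. c * t powr (q - 2) - t powr (q - 1)) has_integral (c powr q / (q * (q - 1)))) {0..c}
      \<longleftrightarrow> ((\<lambda>t. t powr (q - 2) * (c - t)) has_integral (c powr q / (q * (q - 1)))) {0..c}"
    using q by (intro has_integral_cong) (auto simp: powr_mult_base algebra_simps)
  finally have "((\<lambda>t. t powr (q - 2) * (c - t)) has_integral (c powr q / (q * (q - 1)))) {0..c}" .
  then have "(\<integral>\<^sup>+ t. ennreal (t powr (q - 2) * (c - t)) * indicator {0..c} t \<partial>lborel)
      = ennreal (c powr q / (q * (q - 1)))"
    using c by (intro nn_integral_has_integral_lebesgue') auto
  moreover have "(\<integral>\<^sup>+ t. ennreal (t powr (q - 2)) * ennreal (c - t) \<partial>restrict_space lborel {0<..})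
      = (\<integral>\<^sup>+ t. ennreal (t powr (q - 2) * (c - t)) * indicator {0..c} t \<partial>lborel)"
    by (auto intro!: nn_integral_cong simp: nn_integral_restrict_space indicator_def
        ennreal_mult[symmetric] ennreal_neg)
  ultimately show ?thesis
    by simp
qed

lemma nn_integral_powr_layer_cake:
  fixes h :: "'a \<Rightarrow> real"
  assumes sf: "sigma_finite_measure M" and [measurable]: "h \<in> borel_measurable M"
    and nonneg: "\<And>x. x \<in> space M \<Longrightarrow> 0 \<le> h x" and q: "1 < q"
  shows "(\<integral>\<^sup>+ x. ennreal (h x powr q) \<partial>M) = ennreal (q * (q - 1)) *
    (\<integral>\<^sup>+ t. ennreal (t powr (q - 2)) * (\<integral>\<^sup>+ x. ennreal (h x - t) \<partial>M) \<partial>restrict_space lborel {0<..})"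
proof -
  let ?R = "restrict_space lborel {0::real<..}"
  interpret pair_sigma_finite M lborel
    by (intro pair_sigma_finite.intro sf sigma_finite_lborel)
  have "(\<integral>\<^sup>+ t. ennreal (t powr (q - 2)) * (\<integral>\<^sup>+ x. ennreal (h x - t) \<partial>M) \<partial>?R)
      = (\<integral>\<^sup>+ t. \<integral>\<^sup>+ x. ennreal (t powr (q - 2)) * ennreal (h x - t) * indicator {0<..} t \<partial>M \<partial>lborel)"
    by (auto simp: nn_integral_restrict_space nn_integral_cmult nn_integral_multc intro!: nn_integral_cong)
  also have "\<dots> = (\<integral>\<^sup>+ x. \<integral>\<^sup>+ t. ennreal (t powr (q - 2)) * ennreal (h x - t) * indicator {0<..} t \<partial>lborel \<partial>M)"
    by (rule Fubini') measurable
  also have "\<dots> = (\<integral>\<^sup>+ x. \<integral>\<^sup>+ t. ennreal (t powr (q - 2)) * ennreal (h x - t) \<partial>?R \<partial>M)"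
    by (simp add: nn_integral_restrict_space)
  also have "\<dots> = (\<integral>\<^sup>+ x. ennreal (h x powr q / (q * (q - 1))) \<partial>M)"
    using nonneg q by (intro nn_integral_cong nn_integral_powr_mult_excess)
  finally have "ennreal (q * (q - 1)) * (\<integral>\<^sup>+ t. ennreal (t powr (q - 2)) * (\<integral>\<^sup>+ x. ennreal (h x - t) \<partial>M) \<partial>?R)
      = (\<integral>\<^sup>+ x. ennreal (q * (q - 1)) * ennreal (h x powr q / (q * (q - 1))) \<partial>M)"
    by (simp add: nn_integral_cmult)
  also have "\<dots> = (\<integral>\<^sup>+ x. ennreal (h x powr q) \<partial>M)"
    using q by (intro nn_integral_cong) (simp add: ennreal_mult[symmetric])
  finally show ?thesis ..
qed

lemma distfun_tail_eq_nn_integral: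
  assumes "sigma_finite_measure M" and "u \<in> borel_measurable M"
  shows "distfun_tail M u \<tau> = (\<integral>\<^sup>+ x. ennreal (norm (u x) - \<tau>) \<partial>M)"
  unfolding distfun_tail_def distfun_def using assms by (intro nn_integral_Ici_emeasure_less) auto

lemma borel_measurable_distfun_tail:
  assumes "sigma_finite_measure M" and [measurable]: "u \<in> borel_measurable M"
  shows "distfun_tail M u \<in> borel_measurable borel"
proof -
  interpret sigma_finite_measure M by fact
  have "distfun_tail M u = (\<lambda>\<tau>. \<integral>\<^sup>+ x. ennreal (norm (u x) - \<tau>) \<partial>M)"
    using assms by (simp add: fun_eq_iff distfun_tail_eq_nn_integral)
  also have "\<dots> \<in> borel_measurable borel"
    by (rule borel_measurable_nn_integral) measurable
  finally show ?thesis .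
qed

lemma nn_integral_norm_powr_eq_tail_moment:
  assumes "sigma_finite_measure M" and "u \<in> borel_measurable M" and "1 < q"
  shows "(\<integral>\<^sup>+ x. ennreal (norm (u x) powr q) \<partial>M) = ennreal (q * (q - 1)) * tail_moment M q u"
  unfolding tail_moment_def distfun_tail_eq_nn_integral[OF assms(1,2)]
  using assms by (intro nn_integral_powr_layer_cake) auto

lemma integral_norm_powr_eq_tail_moment:
  assumes "sigma_finite_measure M" and "in_Lp M q u" and "1 < q"
  shows "ennreal (\<integral>x. norm (u x) powr q \<partial>M) = ennreal (q * (q - 1)) * tail_moment M q u"
  using assms nn_integral_norm_powr_eq_tail_moment[of M u q]
  by (simp add: in_Lp_def nn_integral_eq_integral)

lemma tail_moment_less_top:
  assumes "sigma_finite_measure M" and "in_Lp M q u" and "1 < q"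
  shows "tail_moment M q u < \<infinity>"
proof -
  have "ennreal (q * (q - 1)) * tail_moment M q u < \<infinity>"
    unfolding integral_norm_powr_eq_tail_moment[OF assms, symmetric] by simp
  then show ?thesis
    using assms(3) by (auto simp: ennreal_mult_less_top)
qed

lemma Lp_norm_le_iff_tail_moment_le:
  assumes sf: "sigma_finite_measure M" and f: "in_Lp M q f" and g: "in_Lp M q g" and q: "1 < q"
  shows "Lp_norm M q g \<le> Lp_norm M q f \<longleftrightarrow> tail_moment M q g \<le> tail_moment M q f"
proof -
  have nonneg: "0 \<le> (\<integral>x. norm (f x) powr q \<partial>M)" "0 \<le> (\<integral>x. norm (g x) powr q \<partial>M)"
    by (simp_all add: integral_nonneg_AE)
  have "0 < 1 / q"
    using q by simp
  then have "Lp_norm M q g \<le> Lp_norm M q f \<longleftrightarrow> (\<integral>x. norm (g x) powr q \<partial>M) \<le> (\<integral>x. norm (f x) powr q \<partial>M)"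
    unfolding Lp_norm_def using nonneg
      powr_less_mono2[of "1 / q" "\<integral>x. norm (f x) powr q \<partial>M" "\<integral>x. norm (g x) powr q \<partial>M"]
      powr_mono2[of "1 / q" "\<integral>x. norm (g x) powr q \<partial>M" "\<integral>x. norm (f x) powr q \<partial>M"]
    by linarith
  also have "\<dots> \<longleftrightarrow> ennreal (\<integral>x. norm (g x) powr q \<partial>M) \<le> ennreal (\<integral>x. norm (f x) powr q \<partial>M)"
    using nonneg(1) by (rule ennreal_le_iff[symmetric])
  also have "\<dots> \<longleftrightarrow> ennreal (q * (q - 1)) * tail_moment M q g \<le> ennreal (q * (q - 1)) * tail_moment M q f"
    by (simp only: integral_norm_powr_eq_tail_moment[OF sf _ q] f g)
  also have "\<dots> \<longleftrightarrow> tail_moment M q g \<le> tail_moment M q f"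
    using q by (intro ennreal_mult_le_mult_iff) auto
  finally show ?thesis .
qed

lemma in_Lp_smaller_exponent:
  fixes u :: "'a \<Rightarrow> 'b::{banach, second_countable_topology}"
  assumes u: "in_Lp M p u" and support: "emeasure M {x \<in> space M. u x \<noteq> 0} < \<infinity>"
    and q: "0 < q" "q \<le> p"
  shows "in_Lp M q u"
proof -
  let ?S = "{x \<in> space M. u x \<noteq> 0}"
  have [measurable]: "u \<in> borel_measurable M" and int_p: "integrable M (\<lambda>x. norm (u x) powr p)"
    using u by (auto simp: in_Lp_def)
  have dominant: "integrable M (\<lambda>x. indicator ?S x + norm (u x) powr p :: real)"
    using support int_p by (intro Bochner_Integration.integrable_add integrable_real_indicator) auto
  have bound: "norm (u x) powr q \<le> indicator ?S x + norm (u x) powr p" if "x \<in> space M" for x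
  proof (cases "u x = 0")
    case False
    have "norm (u x) powr q \<le> 1 + norm (u x) powr p"
    proof (cases "norm (u x) \<le> 1")
      case True
      then show ?thesis
        using q powr_mono2[of q "norm (u x)" 1] by (simp add: add_increasing2)
    next
      case False
      then have "norm (u x) powr q \<le> norm (u x) powr p"
        using q by (intro powr_mono) auto
      then show ?thesis
        by simp
    qed
    then show ?thesis
      using False that by (simp add: indicator_def)
  qed simp
  have "AE x in M. norm (norm (u x) powr q) \<le> norm (indicator ?S x + norm (u x) powr p :: real)"
    using bound by (intro AE_I2) simp
  then have "integrable M (\<lambda>x. norm (u x) powr q)"
    by (intro Bochner_Integration.integrable_bound[OF dominant]) measurable
  then show ?thesis
    by (simp add: in_Lp_def)
qed

lemma nn_integral_le_of_single_crossing:
  fixes F G w\<^sub>0 w :: "'a \<Rightarrow> ennreal" and c :: ennreal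
  assumes [measurable]: "F \<in> borel_measurable N" "G \<in> borel_measurable N"
    "w\<^sub>0 \<in> borel_measurable N" "w \<in> borel_measurable N" "A \<in> sets N"
    and below: "\<And>x. x \<in> A \<Longrightarrow> F x \<le> G x \<and> w x \<le> c * w\<^sub>0 x"
    and above: "\<And>x. x \<in> space N - A \<Longrightarrow> G x \<le> F x \<and> c * w\<^sub>0 x \<le> w x"
    and le: "(\<integral>\<^sup>+ x. w\<^sub>0 x * G x \<partial>N) \<le> (\<integral>\<^sup>+ x. w\<^sub>0 x * F x \<partial>N)"
    and finite: "(\<integral>\<^sup>+ x. w\<^sub>0 x * F x \<partial>N) < \<infinity>"
  shows "(\<integral>\<^sup>+ x. w x * G x \<partial>N) \<le> (\<integral>\<^sup>+ x. w x * F x \<partial>N)"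
proof -
  define H where "H x = (if x \<in> A then F x else G x)" for x
  define excess_below where
    "excess_below v = (\<integral>\<^sup>+ x. v x * (G x - F x) * indicator A x \<partial>N)" for v
  define excess_above where
    "excess_above v = (\<integral>\<^sup>+ x. v x * (F x - G x) * indicator (space N - A) x \<partial>N)" for v
  have [measurable]: "H \<in> borel_measurable N"
    unfolding H_def by measurable
  have split_G: "(\<integral>\<^sup>+ x. v x * G x \<partial>N) = (\<integral>\<^sup>+ x. v x * H x \<partial>N) + excess_below v"
    and split_F: "(\<integral>\<^sup>+ x. v x * F x \<partial>N) = (\<integral>\<^sup>+ x. v x * H x \<partial>N) + excess_above v"
    if [measurable]: "v \<in> borel_measurable N" for v
    using below above unfolding excess_below_def excess_above_def
    by (auto simp: H_def indicator_def nn_integral_add[symmetric] distrib_left[symmetric]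
        add_diff_inverse_ennreal intro!: nn_integral_cong)
  have "(\<integral>\<^sup>+ x. w\<^sub>0 x * H x \<partial>N) \<noteq> \<infinity>"
    using finite unfolding split_F[OF assms(3)] by (auto simp: top_unique)
  then have "excess_below w\<^sub>0 \<le> excess_above w\<^sub>0"
    using le unfolding split_F[OF assms(3)] split_G[OF assms(3)] by (simp add: ennreal_add_left_cancel_le)
  then have "c * excess_below w\<^sub>0 \<le> c * excess_above w\<^sub>0"
    by (rule mult_left_mono) simp
  moreover have "excess_below w \<le> c * excess_below w\<^sub>0"
  proof -
    have "w x * (G x - F x) * indicator A x \<le> c * (w\<^sub>0 x * (G x - F x) * indicator A x)" for x
      using below[of x] mult_right_mono[of "w x" "c * w\<^sub>0 x" "G x - F x"]
      by (cases "x \<in> A") (simp_all add: mult.assoc)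
    then show ?thesis
      unfolding excess_below_def by (simp add: nn_integral_mono flip: nn_integral_cmult)
  qed
  moreover have "c * excess_above w\<^sub>0 \<le> excess_above w"
  proof -
    have "c * (w\<^sub>0 x * (F x - G x) * indicator (space N - A) x) \<le> w x * (F x - G x) * indicator (space N - A) x" for x
      using above[of x] mult_right_mono[of "c * w\<^sub>0 x" "w x" "F x - G x"]
      by (cases "x \<in> space N - A") (simp_all add: mult.assoc)
    then show ?thesis
      unfolding excess_above_def by (simp add: nn_integral_mono flip: nn_integral_cmult)
  qed
  ultimately have "excess_below w \<le> excess_above w"
    by order
  then show ?thesis
    unfolding split_F[OF assms(4)] split_G[OF assms(4)] by (rule add_left_mono)
qed

lemma tail_moment_le_of_crossing:
  fixes f :: "'a \<Rightarrow> 'b::real_normed_vector" and g :: "'a \<Rightarrow> 'c::real_normed_vector"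
  assumes sf: "sigma_finite_measure M"
    and [measurable]: "f \<in> borel_measurable M" "g \<in> borel_measurable M"
    and p: "p\<^sub>0 \<le> p" and \<tau>\<^sub>1: "0 \<le> \<tau>\<^sub>1"
    and above: "\<And>\<tau>. \<tau>\<^sub>1 \<le> \<tau> \<Longrightarrow> distfun_tail M g \<tau> \<le> distfun_tail M f \<tau>"
    and below: "\<And>\<tau>. 0 \<le> \<tau> \<Longrightarrow> \<tau> \<le> \<tau>\<^sub>1 \<Longrightarrow> distfun_tail M f \<tau> \<le> distfun_tail M g \<tau>"
    and le: "tail_moment M p\<^sub>0 g \<le> tail_moment M p\<^sub>0 f" and finite: "tail_moment M p\<^sub>0 f < \<infinity>"
  shows "tail_moment M p g \<le> tail_moment M p f"
proof -
  let ?R = "restrict_space lborel {0::real<..}"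
  have [measurable]: "distfun_tail M f \<in> borel_measurable ?R" "distfun_tail M g \<in> borel_measurable ?R"
    by (intro measurable_restrict_space1; simp add: borel_measurable_distfun_tail[OF sf])+
  have [measurable]: "(\<lambda>t. t powr r) \<in> borel_measurable ?R" for r
    by (intro measurable_restrict_space1) simp
  have weight: "t powr (p - 2) = t powr (p - p\<^sub>0) * t powr (p\<^sub>0 - 2)" if "0 < t" for t :: real
    using that by (simp add: powr_add[symmetric])
  have weight_below: "ennreal (t powr (p - 2)) \<le> ennreal (\<tau>\<^sub>1 powr (p - p\<^sub>0)) * ennreal (t powr (p\<^sub>0 - 2))"
    if "0 < t" "t < \<tau>\<^sub>1" for t
  proof -
    have "t powr (p - p\<^sub>0) \<le> \<tau>\<^sub>1 powr (p - p\<^sub>0)"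
      using that p by (intro powr_mono2) auto
    then show ?thesis
      using that by (simp add: weight ennreal_mult[symmetric] mult_right_mono)
  qed
  have weight_above: "ennreal (\<tau>\<^sub>1 powr (p - p\<^sub>0)) * ennreal (t powr (p\<^sub>0 - 2)) \<le> ennreal (t powr (p - 2))"
    if "0 < t" "\<tau>\<^sub>1 \<le> t" for t
  proof -
    have "\<tau>\<^sub>1 powr (p - p\<^sub>0) \<le> t powr (p - p\<^sub>0)"
      using that p \<tau>\<^sub>1 by (intro powr_mono2) auto
    then show ?thesis
      using that by (simp add: weight ennreal_mult[symmetric] mult_right_mono)
  qed
  show ?thesis
    unfolding tail_moment_def
  proof (rule nn_integral_le_of_single_crossing[where A = "{0<..<\<tau>\<^sub>1}" and c = "ennreal (\<tau>\<^sub>1 powr (p - p\<^sub>0))"])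
    show "{0<..<\<tau>\<^sub>1} \<in> sets ?R"
      by (auto simp: sets_restrict_space_iff)
  qed (use below above weight_below weight_above le finite in \<open>auto simp: tail_moment_def\<close>)
qed

theorem mainTheorem6:
  fixes M :: "'a measure" and f g :: "'a \<Rightarrow> 'b::{banach, second_countable_topology}"
    and p p0 \<tau>1 :: real
  assumes "sigma_finite_measure M"
    and "1 < p0" and "p0 \<le> p"
    and "in_Lp M p f" and "in_Lp M p g"
    and "emeasure M {x \<in> space M. f x \<noteq> 0} < \<infinity>"
    and "emeasure M {x \<in> space M. g x \<noteq> 0} < \<infinity>"
    and "Lp_norm M p0 g \<le> Lp_norm M p0 f"
    and "0 \<le> \<tau>1"
    and "\<And>\<tau>. \<tau>1 \<le> \<tau> \<Longrightarrow>
           (\<integral>\<^sup>+ s \<in> {\<tau>..}. distfun M g s \<partial>lborel) \<le> (\<integral>\<^sup>+ s \<in> {\<tau>..}. distfun M f s \<partial>lborel)"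
    and "\<And>\<tau>. 0 \<le> \<tau> \<Longrightarrow> \<tau> \<le> \<tau>1 \<Longrightarrow>
           (\<integral>\<^sup>+ s \<in> {\<tau>..}. distfun M f s \<partial>lborel) \<le> (\<integral>\<^sup>+ s \<in> {\<tau>..}. distfun M g s \<partial>lborel)"
  shows "Lp_norm M p g \<le> Lp_norm M p f"
proof -
  have f_g_measurable: "f \<in> borel_measurable M" "g \<in> borel_measurable M"
    using assms(4,5) by (simp_all add: in_Lp_def)
  have f\<^sub>0: "in_Lp M p0 f" and g\<^sub>0: "in_Lp M p0 g"
    using assms(2,3) by (auto intro!: in_Lp_smaller_exponent[OF assms(4,6)] in_Lp_smaller_exponent[OF assms(5,7)])
  have "tail_moment M p0 g \<le> tail_moment M p0 f"
    using assms(8) Lp_norm_le_iff_tail_moment_le[OF assms(1) f\<^sub>0 g\<^sub>0 assms(2)] by simp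
  moreover have "tail_moment M p0 f < \<infinity>"
    using assms(1) f\<^sub>0 assms(2) by (rule tail_moment_less_top)
  ultimately have "tail_moment M p g \<le> tail_moment M p f"
    using tail_moment_le_of_crossing[OF assms(1) f_g_measurable assms(3,9)] assms(10,11)
    unfolding distfun_tail_def by blast
  then show ?thesis
    using Lp_norm_le_iff_tail_moment_le[OF assms(1,4,5)] assms(2,3) by simp
qed

end
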